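(* Let $K$ be a compact Hausdorff space containing a nontrivial convergent sequence (a sequence $(x_n)$ converging to a point $x\notin\{x_n:n\in\mathbb{N}\}$). Then $C(K)$ fails the ball fixed point property. In particular, $C(K)$ fails the ball fixed point property for every infinite metrizable compact space $K$.
   Context: $C(K)$ is the real Banach space of continuous functions $K\to\mathbb{R}$ with the sup norm. A real Banach space $X$ has the ball fixed point property (BFPP) if every nonexpansive map $T\colon B_X\to B_X$ (i.e. $\|Tx-Ty\|\le\|x-y\|$) has a fixed point, where $B_X$ is the closed unit ball. *)

theory Defs
  imports "HOL-Analysis.Analysis"
begin

definition ball_fpp :: "'b::real_normed_vector itself \<Rightarrow> bool" where
  "ball_fpp _ \<longleftrightarrow>
     (\<forall>T :: 'b \<Rightarrow> 'b.
        (\<forall>x\<in>cball 0 1. T x \<in> cball 0 1) \<and>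
        (\<forall>x\<in>cball 0 1. \<forall>y\<in>cball 0 1. norm (T x - T y) \<le> norm (x - y))
        \<longrightarrow> (\<exists>x\<in>cball 0 1. T x = x))"

end

theory Submission
  imports Defs
begin

text \<open>Let \<open>x\<^sub>k \<rightarrow> p\<close> with the \<open>x\<^sub>k\<close> distinct and different from \<open>p\<close>. By Tietze's theorem
  there is a continuous \<open>g\<close> on \<open>K\<close> with \<open>g(x\<^sub>k) = (-1)\<^sup>k/(k+1)\<close>. The map \<open>T f = max (-1) (min 1 (f + g))\<close>
  is a nonexpansive self-map of the unit ball of \<open>C(K)\<close>. A fixed point \<open>f\<close> would satisfy
  \<open>f(x\<^sub>k) = (-1)\<^sup>k\<close>, because \<open>g(x\<^sub>k)\<close> pushes \<open>f(x\<^sub>k)\<close> to the boundary of \<open>[-1,1]\<close>; this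
  contradicts the continuity of \<open>f\<close> at \<open>p\<close>.\<close>

lemma Hausdorff_space_euclidean_t2: "Hausdorff_space (euclidean :: 'a::t2_space topology)"
  unfolding Hausdorff_space_def by (metis disjnt_def hausdorff open_openin)

lemma finite_imp_closed_if_Hausdorff_space:
  assumes "Hausdorff_space (euclidean :: 'a::topological_space topology)" and "finite (F :: 'a set)"
  shows "closed F"
  using Hausdorff_imp_t1_space[OF assms(1)] assms(2)
  unfolding t1_space_closedin_finite closed_closedin by auto

lemma inj_sequence_in_range_tendsto:
  fixes s :: "nat \<Rightarrow> 'a::topological_space"
  assumes H: "Hausdorff_space (euclidean :: 'a topology)"
    and lim: "s \<longlonglongrightarrow> p" and np: "p \<notin> range s"
  obtains r where "inj r" "range r \<subseteq> range s" "r \<longlonglongrightarrow> p"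
proof -
  have "infinite (range s)"
  proof
    assume "finite (range s)"
    then have "closed (range s)" by (rule finite_imp_closed_if_Hausdorff_space[OF H])
    with Lim_in_closed_set[OF this _ _ lim] np show False by auto
  qed
  then obtain r :: "nat \<Rightarrow> 'a" where r: "inj r" "range r \<subseteq> range s"
    using infinite_iff_countable_subset[of "range s"] by auto
  have "r \<longlonglongrightarrow> p"
  proof (rule topological_tendstoI)
    fix V assume "open V" "p \<in> V"
    then obtain N where N: "\<And>n. n \<ge> N \<Longrightarrow> s n \<in> V"
      using topological_tendstoD[OF lim] unfolding eventually_sequentially by blast
    have "finite (r -` s ` {..<N})" using r(1) by (intro finite_vimageI) auto
    then have "eventually (\<lambda>k. r k \<notin> s ` {..<N}) sequentially"
      by (simp add: eventually_cofinite vimage_def flip: cofinite_eq_sequentially)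
    then show "eventually (\<lambda>k. r k \<in> V) sequentially"
    proof (rule eventually_mono)
      fix k assume k: "r k \<notin> s ` {..<N}"
      obtain n where n: "r k = s n" using r(2) by auto
      with k have "n \<ge> N" by (auto simp: not_le)
      with N n show "r k \<in> V" by simp
    qed
  qed
  with r that show ?thesis by blast
qed

lemma continuous_on_insert_limit_range:
  fixes r :: "nat \<Rightarrow> 'a::topological_space" and \<psi> :: "'a \<Rightarrow> 'b::topological_space"
  assumes H: "Hausdorff_space (euclidean :: 'a topology)"
    and lim: "r \<longlonglongrightarrow> p" and np: "p \<notin> range r"
    and lim_\<psi>: "(\<lambda>k. \<psi> (r k)) \<longlonglongrightarrow> \<psi> p"
  shows "continuous_on (insert p (range r)) \<psi>"
  unfolding continuous_on_def
proof
  fix x assume "x \<in> insert p (range r)"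
  then consider "x = p" | n where "x = r n" by blast
  then show "(\<psi> \<longlongrightarrow> \<psi> x) (at x within insert p (range r))"
  proof cases
    case 1
    show ?thesis unfolding 1
    proof (rule topological_tendstoI)
      fix V assume "open V" "\<psi> p \<in> V"
      then obtain N where N: "\<And>k. k \<ge> N \<Longrightarrow> \<psi> (r k) \<in> V"
        using topological_tendstoD[OF lim_\<psi>] unfolding eventually_sequentially by blast
      have "open (- r ` {..<N})"
        using finite_imp_closed_if_Hausdorff_space[OF H] by (simp add: open_Compl)
      moreover have "p \<in> - r ` {..<N}" using np by auto
      moreover have "\<psi> y \<in> V" if "y \<in> - r ` {..<N}" "y \<noteq> p" "y \<in> insert p (range r)" for y
        using that N by (force simp: not_le)
      ultimately show "eventually (\<lambda>y. \<psi> y \<in> V) (at p within insert p (range r))"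
        unfolding eventually_at_topological by blast
    qed
  next
    case 2
    text \<open>\<open>r n\<close> is isolated: the rest of the sequence, with its limit, is compact and hence closed.\<close>
    have "compactin euclidean (insert p (range r - {r n}))"
      by (rule compactin_sequence_with_limit) (use lim in auto)
    then have "closed (insert p (range r - {r n}))"
      unfolding closed_closedin by (rule compactin_imp_closedin[OF H])
    then have "open (- insert p (range r - {r n}))" by (rule open_Compl)
    moreover have "r n \<in> - insert p (range r - {r n})" using np by auto
    ultimately have "\<not> r n islimpt insert p (range r)"
      by (auto elim!: islimptE[where T = "- insert p (range r - {r n})"])
    then have "at x within insert p (range r) = bot" by (simp add: 2 trivial_limit_within)
    then show ?thesis by simp
  qed
qed

lemma continuous_sign_alternating_on_sequence:
  fixes r :: "nat \<Rightarrow> 'a::topological_space"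
  assumes cpt: "compact (UNIV :: 'a set)" and H: "Hausdorff_space (euclidean :: 'a topology)"
    and inj: "inj r" and lim: "r \<longlonglongrightarrow> p" and np: "p \<notin> range r"
  obtains g :: "'a \<Rightarrow> real"
  where "continuous_on UNIV g" "\<And>k. even k \<Longrightarrow> g (r k) > 0" "\<And>k. odd k \<Longrightarrow> g (r k) < 0"
proof -
  define S where "S = insert p (range r)"
  define \<psi> where "\<psi> y = (if y = p then 0 else (-1) ^ inv r y / real (Suc (inv r y)))" for y
  have \<psi>_r: "\<psi> (r k) = (-1) ^ k / real (Suc k)" for k
    using np inj by (auto simp: \<psi>_def)
  have "(\<lambda>k. (-1) ^ k / real (Suc k)) \<longlonglongrightarrow> 0"
    by (rule Lim_null_comparison[OF always_eventually LIMSEQ_inverse_real_of_nat])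
      (simp add: norm_divide power_abs inverse_eq_divide)
  moreover have "\<psi> p = 0" by (simp add: \<psi>_def)
  ultimately have "(\<lambda>k. \<psi> (r k)) \<longlonglongrightarrow> \<psi> p"
    by (simp only: \<psi>_r)
  then have cont_\<psi>: "continuous_map (subtopology euclidean S) euclideanreal \<psi>"
    unfolding S_def continuous_map_iff_continuous
    by (rule continuous_on_insert_limit_range[OF H lim np])
  have closed_S: "closedin euclidean S"
    unfolding S_def by (rule compactin_imp_closedin[OF H compactin_sequence_with_limit]) (use lim in auto)
  have "normal_space (euclidean :: 'a topology)"
    using cpt H by (intro compact_Hausdorff_or_regular_imp_normal_space) (simp_all add: compact_space_def)
  then obtain g where g: "continuous_map euclidean euclideanreal g" "\<And>x. x \<in> S \<Longrightarrow> g x = \<psi> x"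
    using Tietze_extension_realinterval[OF _ closed_S is_interval_univ UNIV_not_empty cont_\<psi> subset_UNIV]
    by metis
  show ?thesis
  proof
    show "continuous_on UNIV g" using g(1) by simp
    show "g (r k) > 0" if "even k" for k using that g(2) \<psi>_r by (simp add: S_def)
    show "g (r k) < 0" if "odd k" for k using that g(2) \<psi>_r by (simp add: S_def)
  qed
qed

lemma not_ball_fpp_if_sign_alternating:
  fixes r :: "nat \<Rightarrow> 'a::topological_space" and g :: "'a \<Rightarrow> real"
  assumes lim: "r \<longlonglongrightarrow> p" and cont_g: "continuous_on UNIV g"
    and pos: "\<And>k. even k \<Longrightarrow> g (r k) > 0" and neg: "\<And>k. odd k \<Longrightarrow> g (r k) < 0"
  shows "\<not> ball_fpp TYPE('a \<Rightarrow>\<^sub>C real)"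
proof -
  define c :: "real \<Rightarrow> real" where "c a = max (-1) (min 1 a)" for a
  define T :: "('a \<Rightarrow>\<^sub>C real) \<Rightarrow> ('a \<Rightarrow>\<^sub>C real)"
    where "T f = Bcontfun (\<lambda>t. c (f t + g t))" for f
  have T_apply: "T f t = c (f t + g t)" for f t
  proof -
    have "(\<lambda>t. c (f t + g t)) \<in> bcontfun"
    proof (rule bcontfun_normI)
      show "continuous_on UNIV (\<lambda>t. c (f t + g t))"
        unfolding c_def by (intro continuous_intros cont_g continuous_on_apply_bcontfun)
      show "norm (c (f t + g t)) \<le> 1" for t by (simp add: c_def)
    qed
    then show ?thesis by (simp add: T_def Bcontfun_inverse)
  qed
  have T_ball: "T f \<in> cball 0 1" for f
    unfolding mem_cball_0 by (rule norm_bound) (auto simp: T_apply c_def)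
  have T_nonexpansive: "norm (T f - T h) \<le> norm (f - h)" for f h
  proof (rule norm_bound)
    fix t
    have "\<bar>T f t - T h t\<bar> \<le> \<bar>f t - h t\<bar>" unfolding T_apply c_def by linarith
    also have "\<dots> \<le> norm (f - h)" using norm_bounded[of "f - h" t] by simp
    finally show "norm ((T f - T h) t) \<le> norm (f - h)" by simp
  qed
  have "T f \<noteq> f" for f
  proof
    assume fixed: "T f = f"
    have fixed_at: "f t = c (f t + g t)" for t
      using T_apply[of f t] unfolding fixed .
    have even_r: "f (r (2 * k)) = 1" for k
      using fixed_at[of "r (2 * k)"] pos[of "2 * k"] by (simp add: c_def)
    have odd_r: "f (r (2 * k + 1)) = -1" for k
      using fixed_at[of "r (2 * k + 1)"] neg[of "2 * k + 1"] by (simp add: c_def)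
    have "(\<lambda>k. f (r k)) \<longlonglongrightarrow> f p"
      by (rule continuous_on_tendsto_compose[OF continuous_on_apply_bcontfun[of UNIV] lim]) auto
    then have "(\<lambda>k. f (r (2 * k))) \<longlonglongrightarrow> f p" and "(\<lambda>k. f (r (2 * k + 1))) \<longlonglongrightarrow> f p"
      by (auto intro!: LIMSEQ_subseq_LIMSEQ[unfolded o_def, of "\<lambda>k. f (r k)"] simp: strict_mono_def)
    then have "f p = 1" and "f p = -1"
      unfolding even_r odd_r by (simp_all add: LIMSEQ_const_iff)
    then show False by simp
  qed
  then show ?thesis
    unfolding ball_fpp_def using T_ball T_nonexpansive by blast
qed

lemma not_ball_fpp_if_nontrivial_convergent_sequence:
  fixes s :: "nat \<Rightarrow> 'a::topological_space"
  assumes cpt: "compact (UNIV :: 'a set)" and H: "Hausdorff_space (euclidean :: 'a topology)"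
    and lim: "s \<longlonglongrightarrow> p" and np: "p \<notin> range s"
  shows "\<not> ball_fpp TYPE('a \<Rightarrow>\<^sub>C real)"
proof -
  obtain r where r: "inj r" "range r \<subseteq> range s" "r \<longlonglongrightarrow> p"
    using inj_sequence_in_range_tendsto[OF H lim np] .
  with np have "p \<notin> range r" by blast
  then obtain g :: "'a \<Rightarrow> real"
    where "continuous_on UNIV g" "\<And>k. even k \<Longrightarrow> g (r k) > 0" "\<And>k. odd k \<Longrightarrow> g (r k) < 0"
    using continuous_sign_alternating_on_sequence[OF cpt H r(1,3)] by blast
  then show ?thesis
    using not_ball_fpp_if_sign_alternating[OF r(3)] by blast
qed

lemma metrizable_infinite_compact_nontrivial_convergent_sequence:
  assumes cpt: "compact (UNIV :: 'k::topological_space set)" and inf: "infinite (UNIV :: 'k set)"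
    and "metrizable_space (euclidean :: 'k topology)"
  obtains s :: "nat \<Rightarrow> 'k::topological_space" and p where "s \<longlonglongrightarrow> p" "p \<notin> range s"
proof -
  obtain p :: 'k where "p islimpt UNIV"
    using Heine_Borel_imp_Bolzano_Weierstrass[OF cpt inf subset_UNIV] by blast
  then have p: "p \<in> euclidean derived_set_of UNIV"
    unfolding in_derived_set_of by (metis UNIV_I islimptE open_openin topspace_euclidean)
  obtain M d where M: "Metric_space M d" and E: "(euclidean :: 'k topology) = Metric_space.mtopology M d"
    using \<open>metrizable_space euclidean\<close> unfolding metrizable_space_def by blast
  interpret Metric_space M d by (fact M)
  obtain s where "range s \<subseteq> UNIV - {p}" "limitin mtopology s p sequentially"
    using p unfolding E derived_set_of_sequentially_inj_alt by blast
  then have "s \<longlonglongrightarrow> p" "p \<notin> range s"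
    by (auto simp flip: E)
  then show ?thesis by (rule that)
qed

theorem mainTheorem3:
  shows "(compact (UNIV :: 'a::t2_space set) \<and>
          (\<exists>(s :: nat \<Rightarrow> 'a) p. s \<longlonglongrightarrow> p \<and> p \<notin> range s)
          \<longrightarrow> \<not> ball_fpp TYPE('a \<Rightarrow>\<^sub>C real))
       \<and> (compact (UNIV :: 'k::topological_space set) \<and> infinite (UNIV :: 'k set) \<and>
          metrizable_space (euclidean :: 'k topology)
          \<longrightarrow> \<not> ball_fpp TYPE('k \<Rightarrow>\<^sub>C real))"
proof (intro conjI impI)
  assume "compact (UNIV :: 'a set) \<and> (\<exists>(s :: nat \<Rightarrow> 'a) p. s \<longlonglongrightarrow> p \<and> p \<notin> range s)"
  then show "\<not> ball_fpp TYPE('a \<Rightarrow>\<^sub>C real)"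
    using not_ball_fpp_if_nontrivial_convergent_sequence[OF _ Hausdorff_space_euclidean_t2] by blast
next
  assume K: "compact (UNIV :: 'k set) \<and> infinite (UNIV :: 'k set) \<and>
    metrizable_space (euclidean :: 'k topology)"
  then obtain s :: "nat \<Rightarrow> 'k" and p where "s \<longlonglongrightarrow> p" "p \<notin> range s"
    using metrizable_infinite_compact_nontrivial_convergent_sequence by blast
  with K show "\<not> ball_fpp TYPE('k \<Rightarrow>\<^sub>C real)"
    using not_ball_fpp_if_nontrivial_convergent_sequence metrizable_imp_Hausdorff_space by blast
qed

end
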